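(* Let $d_{in}, d_V, p, M$ be positive integers and $d_K$ an even positive integer. Fix weights $W_Q, W_K\in\mathbb{R}^{d_{in}\times d_K}$, $W_V\in\mathbb{R}^{d_{in}\times d_V}$, a feature map $\phi:\mathbb{R}^{d_K}\to\mathbb{R}^{d_K}$, a map $D_1:\mathbb{R}^{d_K}\to\mathbb{R}^{p}$, and a map $D_2$ assigning to every finite sequence of tokens (rows in $\mathbb{R}^{d_{in}}$) a vector in $\mathbb{R}^{p}$, such that there is a map $D_2^{*}$ on finite token sequences with $D_2([A;B]) - D_2(B) = D_2^{*}(A)$ for all finite token sequences $A, B$. For a token sequence $Y = [Y_1,\dots,Y_n]^T\in\mathbb{R}^{n\times d_{in}}$, bias matrix $b_{KV}\in\mathbb{R}^{d_K\times d_V}$ and bias vector $b_D\in\mathbb{R}^p$, define $Q_i = Y_iW_Q$, $K_i = Y_iW_K$, $V_i = Y_iW_V$ (viewed as column vectors) and, for $1\le i\le n$, the output at position $i$ by $$O_i(Y,b_{KV},b_D)^{T} = \frac{\big(R^{d_K}_{\Theta,i}\phi(Q_i)\big)^{T}\Big[\sum_{j=1}^{i}R^{d_K}_{\Theta,j}\phi(K_j)V_j^{T} + b_{KV}\Big]}{D_1(Q_i)^{T}\big(D_2([Y_1,\dots,Y_i]^T) + b_D\big)},$$ assuming the denominators are nonzero. Let $X' = [X'_1,\dots,X'_M]^T\in\mathbb{R}^{M\times d_{in}}$ be a fixed in-context prompt with $K'_j = X'_jW_K$, $V'_j = X'_jW_V$, and set $$b'_{KV} = R^{d_K}_{\Theta,-M}\,b_{KV}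 + \sum_{j=1}^{M}R^{d_K}_{\Theta,j-M}\,\phi(K'_j)V'^{T}_j,\qquad b'_D = b_D + D_2^{*}(X').$$ Then for every $N\ge1$, every $X = [X_1,\dots,X_N]^T\in\mathbb{R}^{N\times d_{in}}$ and every $1\le i\le N$, $$O_{M+i}([X';X],b_{KV},b_D) = O_i(X,b'_{KV},b'_D),$$ where $[X';X] = [X'_1,\dots,X'_M,X_1,\dots,X_N]^T$.
   Context: Rotary matrix: for $\Theta = \{\theta_k = 10000^{-2(k-1)/d_K} : k = 1,\dots,d_K/2\}$ and an integer $m$, $R^{d_K}_{\Theta,m}$ is the $d_K\times d_K$ block-diagonal matrix whose $k$-th $2\times 2$ diagonal block is $\begin{pmatrix}\cos m\theta_k & -\sin m\theta_k\\ \sin m\theta_k & \cos m\theta_k\end{pmatrix}$. The defined $O_i$ is a causally masked (autoregressive) linearized attention layer with rotary positional encoding, augmented with a Key-Value bias $b_{KV}$ added to the Key-Value sum and a bias $b_D$ added to the normalizing term. The separation property of $D_2$ is the paper's standing assumption for this result (it holds e.g. for $D_2\equiv 1$ with $D_1\equiv1$, and for $D_2(Y)=\sum_j\phi(Y_jW_K)$ with $D_1=\phi$). *)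

theory Defs
  imports "HOL-Analysis.Analysis"
begin

(* Conventions: a vector in R^n is a function nat => real whose entries at
   indices >= n are 0 (only indices < n are ever read); a d1 x d2 matrix is a
   function nat => nat => real (entries (a,b), a < d1, b < d2 are used).
   Tokens are row vectors in R^d_in; a token sequence is a list of tokens,
   Y_j = Y ! (j - 1) (1-based positions j). *)

definition valid_vec :: "nat \<Rightarrow> (nat \<Rightarrow> real) \<Rightarrow> bool" where
  "valid_vec n x \<longleftrightarrow> (\<forall>a\<ge>n. x a = 0)"

definition vecmat :: "nat \<Rightarrow> nat \<Rightarrow> (nat \<Rightarrow> real) \<Rightarrow> (nat \<Rightarrow> nat \<Rightarrow> real) \<Rightarrow> (nat \<Rightarrow> real)" where
  "vecmat din d y W = (\<lambda>k. if k < d then (\<Sum>a<din. y a * W a k) else 0)"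

(* theta_k = 10000^(-2(k-1)/dK), k = 1..dK/2; here with 0-based block index b = k-1 *)
definition rope_theta :: "nat \<Rightarrow> nat \<Rightarrow> real" where
  "rope_theta dK b = 10000 powr (- (2 * real b) / real dK)"

definition rope :: "nat \<Rightarrow> int \<Rightarrow> (nat \<Rightarrow> real) \<Rightarrow> (nat \<Rightarrow> real)" where
  "rope dK m v = (\<lambda>k. if k < dK then
      (let b = k div 2; t = real_of_int m * rope_theta dK b in
        if even k then cos t * v (2*b) - sin t * v (2*b+1)
        else sin t * v (2*b) + cos t * v (2*b+1))
     else 0)"

definition rope_mat :: "nat \<Rightarrow> int \<Rightarrow> (nat \<Rightarrow> nat \<Rightarrow> real) \<Rightarrow> (nat \<Rightarrow> nat \<Rightarrow> real)" where
  "rope_mat dK m B = (\<lambda>k c. rope dK m (\<lambda>a. if a < dK then B a c else 0) k)"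

definition attn_out ::
  "nat \<Rightarrow> nat \<Rightarrow> nat \<Rightarrow> nat \<Rightarrow>
   (nat \<Rightarrow> nat \<Rightarrow> real) \<Rightarrow> (nat \<Rightarrow> nat \<Rightarrow> real) \<Rightarrow> (nat \<Rightarrow> nat \<Rightarrow> real) \<Rightarrow>
   ((nat \<Rightarrow> real) \<Rightarrow> (nat \<Rightarrow> real)) \<Rightarrow> ((nat \<Rightarrow> real) \<Rightarrow> (nat \<Rightarrow> real)) \<Rightarrow>
   ((nat \<Rightarrow> real) list \<Rightarrow> (nat \<Rightarrow> real)) \<Rightarrow>
   (nat \<Rightarrow> real) list \<Rightarrow> (nat \<Rightarrow> nat \<Rightarrow> real) \<Rightarrow> (nat \<Rightarrow> real) \<Rightarrow> nat \<Rightarrow> (nat \<Rightarrow> real)" where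
  "attn_out din dK dV p WQ WK WV phi D1 D2 Y bKV bD i =
    (let Q = vecmat din dK (Y ! (i - 1)) WQ;
         K = (\<lambda>j. vecmat din dK (Y ! (j - 1)) WK);
         V = (\<lambda>j. vecmat din dV (Y ! (j - 1)) WV);
         q = rope dK (int i) (phi Q);
         den = (\<Sum>l<p. D1 Q l * (D2 (take i Y) l + bD l))
     in (\<lambda>c. if c < dV then
           (\<Sum>k<dK. q k * ((\<Sum>j\<in>{1..i}. rope dK (int j) (phi (K j)) k * V j c) + bKV k c)) / den
         else 0))"

definition attn_den ::
  "nat \<Rightarrow> nat \<Rightarrow> nat \<Rightarrow> (nat \<Rightarrow> nat \<Rightarrow> real) \<Rightarrow> ((nat \<Rightarrow> real) \<Rightarrow> (nat \<Rightarrow> real)) \<Rightarrow>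
   ((nat \<Rightarrow> real) list \<Rightarrow> (nat \<Rightarrow> real)) \<Rightarrow> (nat \<Rightarrow> real) list \<Rightarrow> (nat \<Rightarrow> real) \<Rightarrow> nat \<Rightarrow> real" where
  "attn_den din dK p WQ D1 D2 Y bD i =
    (\<Sum>l<p. D1 (vecmat din dK (Y ! (i - 1)) WQ) l * (D2 (take i Y) l + bD l))"

end

theory Submission
  imports Defs
begin

(* Rotary encodings make attention scores depend on relative positions only:
   <R_m u, R_n w> = <R_(m-s) u, R_(n-s) w>.  Shifting all positions by -M therefore
   turns the query at position M+i of [X';X] into the query at position i of X, the
   prompt keys into keys at the positions j - M <= 0, which are absorbed into the
   Key-Value bias, and the old bias (a key at position 0) into R_(-M) b_KV.  The
   normalising term absorbs the prompt by the separation property of D_2. *)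

definition rope_inner :: "nat \<Rightarrow> int \<Rightarrow> int \<Rightarrow> (nat \<Rightarrow> real) \<Rightarrow> (nat \<Rightarrow> real) \<Rightarrow> real" where
  "rope_inner dK m n u w = (\<Sum>k<dK. rope dK m u k * rope dK n w k)"

lemma rope_block_inner:
  assumes "Suc (2 * b) < dK"
  shows "rope dK m u (2 * b) * rope dK n w (2 * b)
           + rope dK m u (Suc (2 * b)) * rope dK n w (Suc (2 * b)) =
         cos (real_of_int (m - n) * rope_theta dK b) * (u (2 * b) * w (2 * b) + u (Suc (2 * b)) * w (Suc (2 * b)))
           + sin (real_of_int (m - n) * rope_theta dK b) * (u (2 * b) * w (Suc (2 * b)) - u (Suc (2 * b)) * w (2 * b))"
proof -
  have "real_of_int (m - n) * rope_theta dK b = real_of_int m * rope_theta dK b - real_of_int n * rope_theta dK b"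
    by (simp add: algebra_simps)
  then show ?thesis
    using assms by (simp add: rope_def Let_def cos_diff sin_diff algebra_simps)
qed

lemma rope_inner_eq_blocks:
  assumes "even dK"
  shows "rope_inner dK m n u w =
    (\<Sum>b<dK div 2. cos (real_of_int (m - n) * rope_theta dK b) * (u (2 * b) * w (2 * b) + u (Suc (2 * b)) * w (Suc (2 * b)))
      + sin (real_of_int (m - n) * rope_theta dK b) * (u (2 * b) * w (Suc (2 * b)) - u (Suc (2 * b)) * w (2 * b)))"
    (is "_ = ?rhs")
proof -
  have dK: "dK = dK div 2 * 2" using assms by simp
  have "rope_inner dK m n u w =
      (\<Sum>b<dK div 2. rope dK m u (2 * b) * rope dK n w (2 * b) + rope dK m u (Suc (2 * b)) * rope dK n w (Suc (2 * b)))"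
    unfolding rope_inner_def
    by (subst dK, subst sum.nat_group[symmetric]) (simp add: mult.commute)
  also have "\<dots> = ?rhs"
    by (rule sum.cong[OF refl], rule rope_block_inner) (use assms in \<open>auto elim!: evenE\<close>)
  finally show ?thesis .
qed

lemma rope_inner_shift:
  assumes "even dK"
  shows "rope_inner dK (m + s) (n + s) u w = rope_inner dK m n u w"
  by (simp add: rope_inner_eq_blocks[OF assms])

lemma rope_zero:
  assumes "k < dK"
  shows "rope dK 0 v k = v k"
proof -
  have "even k \<Longrightarrow> 2 * (k div 2) = k" "odd k \<Longrightarrow> Suc (2 * (k div 2)) = k"
    by presburger+
  then show ?thesis
    using assms by (auto simp: rope_def Let_def)
qed

lemma rope_mat_eq_rope_column:
  assumes "even dK"
  shows "rope_mat dK m B k c = rope dK m (\<lambda>a. B a c) k"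
proof -
  have "k < dK \<Longrightarrow> Suc (2 * (k div 2)) < dK"
    using assms by presburger
  then show ?thesis
    by (auto simp: rope_mat_def rope_def Let_def)
qed

lemma rope_score_expand:
  "(\<Sum>k<dK. rope dK m u k * ((\<Sum>j\<in>J. rope dK (g j) (h j) k * v j) + B k)) =
   (\<Sum>j\<in>J. v j * rope_inner dK m (g j) u (h j)) + (\<Sum>k<dK. rope dK m u k * B k)"
  by (simp add: rope_inner_def distrib_left sum.distrib sum_distrib_left sum.swap[of _ J] algebra_simps)

lemma rope_score_shift:
  assumes "even dK"
  shows "(\<Sum>k<dK. rope dK (m + s) u k * ((\<Sum>j\<in>J. rope dK (g j) (h j) k * v j) + B k)) =
         (\<Sum>k<dK. rope dK m u k * ((\<Sum>j\<in>J. rope dK (g j - s) (h j) k * v j) + rope dK (- s) B k))"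
proof -
  have "(\<Sum>k<dK. rope dK (m + s) u k * B k) = rope_inner dK (m + s) 0 u B"
    unfolding rope_inner_def by (rule sum.cong) (simp_all add: rope_zero)
  also have "\<dots> = rope_inner dK m (- s) u B"
    using rope_inner_shift[OF assms, of m s "- s" u B] by simp
  finally have bias: "(\<Sum>k<dK. rope dK (m + s) u k * B k) = (\<Sum>k<dK. rope dK m u k * rope dK (- s) B k)"
    by (simp add: rope_inner_def)
  have keys: "rope_inner dK (m + s) (g j) u (h j) = rope_inner dK m (g j - s) u (h j)" for j
    using rope_inner_shift[OF assms, of m s "g j - s" u "h j"] by simp
  show ?thesis
    by (simp only: rope_score_expand bias keys)
qed

definition attn_num ::
  "nat \<Rightarrow> nat \<Rightarrow> nat \<Rightarrow>
   (nat \<Rightarrow> nat \<Rightarrow> real) \<Rightarrow> (nat \<Rightarrow> nat \<Rightarrow> real) \<Rightarrow> (nat \<Rightarrow> nat \<Rightarrow> real) \<Rightarrow>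
   ((nat \<Rightarrow> real) \<Rightarrow> (nat \<Rightarrow> real)) \<Rightarrow>
   (nat \<Rightarrow> real) list \<Rightarrow> (nat \<Rightarrow> nat \<Rightarrow> real) \<Rightarrow> nat \<Rightarrow> nat \<Rightarrow> real" where
  "attn_num din dK dV WQ WK WV phi Y bKV i c =
    (\<Sum>k<dK. rope dK (int i) (phi (vecmat din dK (Y ! (i - 1)) WQ)) k *
       ((\<Sum>j\<in>{1..i}. rope dK (int j) (phi (vecmat din dK (Y ! (j - 1)) WK)) k
                      * vecmat din dV (Y ! (j - 1)) WV c) + bKV k c))"

lemma attn_out_eq_num_div_den:
  "attn_out din dK dV p WQ WK WV phi D1 D2 Y bKV bD i =
   (\<lambda>c. if c < dV then attn_num din dK dV WQ WK WV phi Y bKV i c / attn_den din dK p WQ D1 D2 Y bD i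
         else 0)"
  unfolding attn_out_def attn_num_def attn_den_def Let_def ..

lemma attn_den_prompt:
  assumes "length Xp = M" "1 \<le> i"
    and "\<forall>l<p. D2 (Xp @ take i X) l - D2 (take i X) l = D2s Xp l"
  shows "attn_den din dK p WQ D1 D2 (Xp @ X) bD (M + i) =
         attn_den din dK p WQ D1 D2 X (\<lambda>l. bD l + D2s Xp l) i"
proof -
  have "(Xp @ X) ! (M + i - 1) = X ! (i - 1)" "take (M + i) (Xp @ X) = Xp @ take i X"
    using assms(1,2) nth_append_right[of Xp "M + i - 1" X] by simp_all
  then show ?thesis
    using assms(3) by (auto simp: attn_den_def algebra_simps intro!: sum.cong)
qed

lemma attn_num_prompt:
  assumes "even dK" "length Xp = M" "1 \<le> i"
  shows "attn_num din dK dV WQ WK WV phi (Xp @ X) bKV (M + i) c =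
         attn_num din dK dV WQ WK WV phi X
           (\<lambda>k c. rope_mat dK (- int M) bKV k c +
              (\<Sum>j\<in>{1..M}. rope dK (int j - int M) (phi (vecmat din dK (Xp ! (j - 1)) WK)) k
                              * vecmat din dV (Xp ! (j - 1)) WV c)) i c"
proof -
  define u where "u = phi (vecmat din dK (X ! (i - 1)) WQ)"
  define key where "key Y s j k = rope dK (int j - s) (phi (vecmat din dK (Y ! (j - 1)) WK)) k
                                  * vecmat din dV (Y ! (j - 1)) WV c" for Y s j k
  have query: "(Xp @ X) ! (M + i - 1) = X ! (i - 1)"
    using assms(2,3) nth_append_right[of Xp "M + i - 1" X] by simp
  have keys: "(\<Sum>j\<in>{1..M + i}. key (Xp @ X) (int M) j k) =
      (\<Sum>j\<in>{1..i}. key X 0 j k) + (\<Sum>j\<in>{1..M}. key Xp (int M) j k)" for k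
  proof -
    have "(\<Sum>j\<in>{1..M + i}. key (Xp @ X) (int M) j k) =
        (\<Sum>j\<in>{1..M}. key (Xp @ X) (int M) j k) + (\<Sum>j\<in>{1..i}. key (Xp @ X) (int M) (j + M) k)"
      using sum.ub_add_nat[of 1 M "\<lambda>j. key (Xp @ X) (int M) j k" i] sum.shift_bounds_cl_nat_ivl[of _ 1 M i]
      by (simp add: add.commute)
    also have "\<dots> = (\<Sum>j\<in>{1..M}. key Xp (int M) j k) + (\<Sum>j\<in>{1..i}. key X 0 j k)"
      using assms(2) by (intro arg_cong2[where f = "(+)"] sum.cong refl) (auto simp: key_def nth_append)
    finally show ?thesis by simp
  qed
  have "attn_num din dK dV WQ WK WV phi (Xp @ X) bKV (M + i) c =
      (\<Sum>k<dK. rope dK (int i + int M) u k *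
         ((\<Sum>j\<in>{1..M + i}. rope dK (int j) (phi (vecmat din dK ((Xp @ X) ! (j - 1)) WK)) k
                      * vecmat din dV ((Xp @ X) ! (j - 1)) WV c) + bKV k c))"
    unfolding attn_num_def query u_def by (simp add: add.commute)
  also have "\<dots> = (\<Sum>k<dK. rope dK (int i) u k *
      ((\<Sum>j\<in>{1..M + i}. key (Xp @ X) (int M) j k) + rope dK (- int M) (\<lambda>a. bKV a c) k))"
    unfolding rope_score_shift[OF assms(1)] key_def ..
  also have "\<dots> = attn_num din dK dV WQ WK WV phi X
           (\<lambda>k c. rope_mat dK (- int M) bKV k c +
              (\<Sum>j\<in>{1..M}. rope dK (int j - int M) (phi (vecmat din dK (Xp ! (j - 1)) WK)) k
                              * vecmat din dV (Xp ! (j - 1)) WV c)) i c"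
    by (simp only: keys) (simp add: attn_num_def key_def u_def rope_mat_eq_rope_column[OF assms(1)] add_ac)
  finally show ?thesis .
qed

theorem theorem4p5:
  fixes din dK dV p M :: nat
    and WQ WK WV :: "nat \<Rightarrow> nat \<Rightarrow> real"
    and phi D1 :: "(nat \<Rightarrow> real) \<Rightarrow> (nat \<Rightarrow> real)"
    and D2 D2s :: "(nat \<Rightarrow> real) list \<Rightarrow> (nat \<Rightarrow> real)"
    and bKV :: "nat \<Rightarrow> nat \<Rightarrow> real" and bD :: "nat \<Rightarrow> real"
    and Xp X :: "(nat \<Rightarrow> real) list" and i :: nat
  assumes "din > 0" "dV > 0" "p > 0" "M > 0" "dK > 0" "even dK"
    and sep: "\<And>A B. \<forall>y\<in>set A. valid_vec din y \<Longrightarrow> \<forall>y\<in>set B. valid_vec din y \<Longrightarrow>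
              \<forall>l<p. D2 (A @ B) l - D2 B l = D2s A l"
    and "length Xp = M" "\<forall>y\<in>set Xp. valid_vec din y"
    and "length X \<ge> 1" "\<forall>y\<in>set X. valid_vec din y"
    and "1 \<le> i" "i \<le> length X"
    and "attn_den din dK p WQ D1 D2 (Xp @ X) bD (M + i) \<noteq> 0"
    and "attn_den din dK p WQ D1 D2 X (\<lambda>l. bD l + D2s Xp l) i \<noteq> 0"
  shows "attn_out din dK dV p WQ WK WV phi D1 D2 (Xp @ X) bKV bD (M + i) =
         attn_out din dK dV p WQ WK WV phi D1 D2 X
           (\<lambda>k c. rope_mat dK (- int M) bKV k c +
              (\<Sum>j\<in>{1..M}. rope dK (int j - int M) (phi (vecmat din dK (Xp ! (j - 1)) WK)) k
                              * vecmat din dV (Xp ! (j - 1)) WV c))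
           (\<lambda>l. bD l + D2s Xp l) i"
proof -
  have prompt_sep: "\<forall>l<p. D2 (Xp @ take i X) l - D2 (take i X) l = D2s Xp l"
    using sep[of Xp "take i X"] assms(9,11) by (auto dest: in_set_takeD)
  show ?thesis
    unfolding attn_out_eq_num_div_den attn_num_prompt[OF assms(6,8,12)]
      attn_den_prompt[where X = X and D2s = D2s, OF assms(8,12) prompt_sep] ..
qed

end
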